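(* Let $s\ge 3$ and let $\kappa_s$ be the partition with $\beta(\kappa_s)=T_s$. Then $\kappa_s$ is an $(s,s+1,s+2)$-core partition of maximum size. If $s$ is even, $\kappa_s$ is the unique $(s,s+1,s+2)$-core partition of maximum size, and it is self-conjugate. If $s$ is odd, then $\kappa_s\ne\kappa_s'$ and $\kappa_s,\kappa_s'$ are exactly the two $(s,s+1,s+2)$-core partitions of maximum size, where $\kappa_s'$ denotes the conjugate partition.
   Context: An $(s,s+1,s+2)$-core is a partition with no hook length divisible by $s$, $s+1$ or $s+2$. The $\beta$-set $\beta(\lambda)$ is the set of hook lengths of the first-column boxes of $\lambda$; a partition is determined by its $\beta$-set. $T_s$ is the set of positive integers not expressible as $k_1s+k_2(s+1)+k_3(s+2)$ with $k_1,k_2,k_3$ nonnegative integers. *)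

theory Defs
  imports Main
begin

text \<open>A partition is a weakly decreasing list of positive integers (parts, largest first).
  Boxes are indexed from 0: box (i,j) with i < length la and j < la ! i.\<close>

definition is_partition :: "nat list \<Rightarrow> bool" where
  "is_partition la \<longleftrightarrow> sorted_wrt (\<ge>) la \<and> (\<forall>x\<in>set la. 0 < x)"

definition psize :: "nat list \<Rightarrow> nat" where
  "psize la = sum_list la"

definition col_len :: "nat list \<Rightarrow> nat \<Rightarrow> nat" where
  "col_len la j = length (filter (\<lambda>x. j < x) la)"

definition conjugate :: "nat list \<Rightarrow> nat list" where
  "conjugate la = map (col_len la) [0..<(if la = [] then 0 else hd la)]"

text \<open>Hook length of box (i,j): arm + leg + 1.\<close>
definition hook :: "nat list \<Rightarrow> nat \<Rightarrow> nat \<Rightarrow> nat" where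
  "hook la i j = (la ! i - j) + (col_len la j - i) - 1"

definition hook_lengths :: "nat list \<Rightarrow> nat set" where
  "hook_lengths la = {hook la i j | i j. i < length la \<and> j < la ! i}"

definition is_core :: "nat \<Rightarrow> nat list \<Rightarrow> bool" where
  "is_core t la \<longleftrightarrow> (\<forall>h\<in>hook_lengths la. \<not> t dvd h)"

definition is_sss_core :: "nat \<Rightarrow> nat list \<Rightarrow> bool" where
  "is_sss_core s la \<longleftrightarrow> is_partition la \<and> is_core s la \<and> is_core (s+1) la \<and> is_core (s+2) la"

definition beta :: "nat list \<Rightarrow> nat set" where
  "beta la = {hook la i 0 | i. i < length la}"

definition T :: "nat \<Rightarrow> nat set" where
  "T s = {n. 0 < n \<and> \<not> (\<exists>k1 k2 k3. n = k1 * s + k2 * (s+1) + k3 * (s+2))}"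

definition kappa :: "nat \<Rightarrow> nat list" where
  "kappa s = (THE la. is_partition la \<and> beta la = T s)"

end

theory Submission
  imports Defs "HOL.Inequalities"
begin

(* Everything is translated into beta sets.  The beta numbers of a partition determine it,
   every finite set of positive integers is a beta set, twice the size of a partition is
   2 * sum X - n(n-1) for its beta set X with n elements, and a partition is a t-core iff its
   beta set is closed under subtracting t.  Hence the beta set X of an (s, s+1, s+2)-core is
   closed under subtracting s, s+1, s+2 and lies in T s.

   Writing n = k(s+1) + p, the set T s is the triangle k < p, p + k < s, whose row k is
   {k+1 ..< s-k}.  Closure forces a nonempty row of X to be at least two shorter than the row
   below, and bounding each row by a top segment bounds twice the size by a quadratic form
   (row_form) in the row sizes.  Maximising this form over admissible row sizes (via a
   staircase comparison and Chebyshev's sum inequality) shows that the rows of T s are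
   optimal, with one further optimum for odd s.  The main theorem follows, using that
   conjugation preserves cores and size and that kappa s is not self-conjugate for odd s. *)

lemma part_mono: "is_partition la \<Longrightarrow> i \<le> j \<Longrightarrow> j < length la \<Longrightarrow> la!j \<le> la!i"
  unfolding is_partition_def by (cases "i = j") (auto simp: sorted_wrt_iff_nth_less)

lemma part_pos: "is_partition la \<Longrightarrow> i < length la \<Longrightarrow> 0 < la!i"
  unfolding is_partition_def by auto

lemma col_len_card: "col_len la j = card {i. i < length la \<and> j < la!i}"
  unfolding col_len_def by (rule length_filter_conv_card)

lemma col_len_le: "col_len la j \<le> length la"
  unfolding col_len_def by simp

lemma col_len_0: "is_partition la \<Longrightarrow> col_len la 0 = length la"
  unfolding col_len_def is_partition_def by (simp add: filter_id_conv)

lemma down_closed_initial: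
  fixes S :: "nat set"
  assumes "finite S" and "\<And>m m'. m \<in> S \<Longrightarrow> m' \<le> m \<Longrightarrow> m' \<in> S"
  shows "S = {..<card S}"
proof (cases "S = {}")
  case True then show ?thesis by simp
next
  case False
  define M where "M = Max S"
  have "M \<in> S" using False assms(1) M_def by simp
  have "S = {..M}"
  proof
    show "S \<subseteq> {..M}" using assms(1) M_def by auto
    show "{..M} \<subseteq> S" using \<open>M \<in> S\<close> assms(2) by auto
  qed
  then show ?thesis by auto
qed

lemma col_len_initial:
  assumes "is_partition la"
  shows "{i. i < length la \<and> j < la!i} = {..<col_len la j}"
proof -
  have "{i. i < length la \<and> j < la!i} = {..<card {i. i < length la \<and> j < la!i}}"
  proof (rule down_closed_initial)
    fix m m' assume "m \<in> {i. i < length la \<and> j < la!i}" "m' \<le> m"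
    then show "m' \<in> {i. i < length la \<and> j < la!i}" using part_mono[OF assms, of m' m] by auto
  qed simp
  then show ?thesis by (simp only: col_len_card)
qed

lemma in_row_iff_in_col:
  assumes "is_partition la" "m < length la"
  shows "j < la!m \<longleftrightarrow> m < col_len la j"
  using col_len_initial[OF assms(1), of j] assms(2) by blast

definition bnum :: "nat list \<Rightarrow> nat \<Rightarrow> nat" where
  "bnum la i = la!i + (length la - 1 - i)"

lemma hook_first_col: "is_partition la \<Longrightarrow> i < length la \<Longrightarrow> hook la i 0 = bnum la i"
  by (simp add: hook_def col_len_0 bnum_def)

lemma beta_bnum:
  assumes "is_partition la" shows "beta la = bnum la ` {..<length la}"
proof (rule set_eqI)
  fix x show "x \<in> beta la \<longleftrightarrow> x \<in> bnum la ` {..<length la}"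
    unfolding beta_def using hook_first_col[OF assms] by auto metis
qed

lemma bnum_strict: "is_partition la \<Longrightarrow> i < j \<Longrightarrow> j < length la \<Longrightarrow> bnum la j < bnum la i"
  using part_mono[of la i j] unfolding bnum_def by auto

lemma bnum_ge: "is_partition la \<Longrightarrow> i < length la \<Longrightarrow> length la - i \<le> bnum la i"
  using part_pos[of la i] unfolding bnum_def by auto

lemma bnum_inj: "is_partition la \<Longrightarrow> inj_on (bnum la) {..<length la}"
proof (rule inj_onI)
  fix x y assume "is_partition la" "x \<in> {..<length la}" "y \<in> {..<length la}" "bnum la x = bnum la y"
  then show "x = y" using bnum_strict[of la x y] bnum_strict[of la y x] by (cases x y rule: linorder_cases) auto
qed

lemma card_beta: "is_partition la \<Longrightarrow> card (beta la) = length la"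
  by (simp add: beta_bnum bnum_inj card_image)

lemma beta_pos: "is_partition la \<Longrightarrow> x \<in> beta la \<Longrightarrow> 0 < x"
  using bnum_ge by (fastforce simp: beta_bnum)

lemma hook_is_beta_gap:
  assumes P: "is_partition la" and i: "i < length la" and j: "j < la!i"
  shows "\<exists>c. c \<notin> beta la \<and> c < bnum la i \<and> hook la i j = bnum la i - c"
proof -
  define n where "n = length la"
  define r where "r = col_len la j"
  have rn: "r \<le> n" unfolding r_def n_def by (rule col_len_le)
  have iff: "\<And>m. m < n \<Longrightarrow> (j < la!m \<longleftrightarrow> m < r)"
    unfolding n_def r_def using in_row_iff_in_col[OF P] by blast
  have ir: "i < r" using iff i j n_def by blast
  define c where "c = n + j - r"
  have hk: "hook la i j = (la!i - j) + (r - i) - 1" unfolding hook_def r_def by simp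
  have bi: "bnum la i = la!i + (n - 1 - i)" unfolding bnum_def n_def by simp
  have "c \<notin> beta la"
  proof
    assume "c \<in> beta la"
    then obtain m where m: "m < n" "c = bnum la m" using beta_bnum[OF P] n_def by auto
    have bm: "bnum la m = la!m + (n - 1 - m)" unfolding bnum_def n_def by simp
    show False
    proof (cases "m < r")
      case True
      then have "j < la!m" using iff m by blast
      then show False using m bm True rn unfolding c_def by simp
    next
      case False
      then have "la!m \<le> j" using iff m by (meson not_le)
      then show False using m bm False rn unfolding c_def by simp
    qed
  qed
  moreover have "c < bnum la i" "hook la i j = bnum la i - c"
    using hk bi ir rn j i unfolding c_def n_def by simp_all
  ultimately show ?thesis by blast
qed

text \<open>Conversely, fix a non-beta number \<open>c\<close> and let \<open>r\<close> be the number of beta numbers above it.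
  Then column \<open>c + r - n\<close> has length exactly \<open>r\<close>; this locates the box realising \<open>b - c\<close>.\<close>
lemma col_len_at_gap:
  assumes P: "is_partition la" and c: "c \<notin> beta la"
    and r: "r = card {m. m < length la \<and> c < bnum la m}"
  shows "length la - r \<le> c" and "col_len la (c + r - length la) = r"
    and "\<And>m. m < length la \<Longrightarrow> m < r \<longleftrightarrow> c < bnum la m"
proof -
  define n where "n = length la"
  define S where "S = {m. m < n \<and> c < bnum la m}"
  have "S = {..<card S}"
  proof (rule down_closed_initial)
    show "finite S" unfolding S_def by simp
    fix m m' assume "m \<in> S" "m' \<le> m"
    then show "m' \<in> S" unfolding S_def
      using bnum_strict[OF P, of m' m] n_def by (cases "m' = m") auto
  qed
  then have Siff: "\<And>m. m < r \<longleftrightarrow> m < n \<and> c < bnum la m"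
    unfolding r n_def[symmetric] S_def[symmetric] by (metis (no_types, lifting) S_def lessThan_iff mem_Collect_eq)
  then show "\<And>m. m < length la \<Longrightarrow> m < r \<longleftrightarrow> c < bnum la m" using n_def by blast
  have "\<not> n < r" using Siff[of n] by simp
  then have rn: "r \<le> n" by simp
  have below: "\<And>m. r \<le> m \<Longrightarrow> m < n \<Longrightarrow> bnum la m < c"
  proof -
    fix m assume a: "r \<le> m" "m < n"
    then have "\<not> c < bnum la m" using Siff[of m] by simp
    moreover have "bnum la m \<noteq> c" using c a(2) beta_bnum[OF P] n_def by auto
    ultimately show "bnum la m < c" by simp
  qed
  have nrc: "n - r \<le> c"
  proof (cases "r < n")
    case True
    have "n - r \<le> bnum la r" using bnum_ge[OF P, of r] True n_def by simp
    then show ?thesis using below[of r] True by simp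
  qed simp
  then show "length la - r \<le> c" using n_def by simp
  define j where "j = c + r - n"
  have bf: "\<And>m. bnum la m = la!m + (n - 1 - m)" unfolding bnum_def n_def by simp
  have jiff: "\<And>m. m < n \<Longrightarrow> (j < la!m \<longleftrightarrow> m < r)"
  proof
    fix m assume m: "m < n" and jm: "j < la!m"
    show "m < r"
    proof (rule ccontr)
      assume "\<not> m < r"
      then have rm: "r \<le> m" by simp
      have "la!m \<le> la!r" using part_mono[OF P rm] m n_def by simp
      moreover have "bnum la r < c" using below[of r] rm m by simp
      ultimately show False using jm bf[of r] rm m nrc unfolding j_def by simp
    qed
  next
    fix m assume m: "m < n" and mr: "m < r"
    then have r1: "r - 1 < n" "m \<le> r - 1" using rn by auto
    have "la!(r-1) \<le> la!m" using part_mono[OF P r1(2)] r1(1) n_def by simp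
    moreover have "c < bnum la (r-1)" using Siff[of "r-1"] mr by simp
    ultimately show "j < la!m" using bf[of "r-1"] mr rn nrc unfolding j_def by simp
  qed
  have "{m. m < length la \<and> j < la!m} = {..<r}" using jiff rn n_def by auto
  then show "col_len la (c + r - length la) = r" using col_len_initial[OF P, of j] j_def n_def by simp
qed

lemma beta_gap_is_hook:
  assumes P: "is_partition la" and i: "i < length la" and c: "c \<notin> beta la" "c < bnum la i"
  shows "bnum la i - c \<in> hook_lengths la"
proof -
  define r where "r = card {m. m < length la \<and> c < bnum la m}"
  define j where "j = c + r - length la"
  note gap = col_len_at_gap[OF P c(1) r_def]
  have ir: "i < r" using gap(3)[OF i] c(2) by simp
  have col: "col_len la j = r" using gap(2) unfolding j_def .
  have ji: "j < la!i" using col in_row_iff_in_col[OF P i] ir by simp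
  have rn: "r \<le> length la" using ir gap(3) by (metis col col_len_le)
  have "hook la i j = (la!i - j) + (r - i) - 1" unfolding hook_def col ..
  also have "\<dots> = bnum la i - c"
    using ji c(2) ir rn gap(1) i unfolding j_def bnum_def by linarith
  finally have "hook la i j = bnum la i - c" .
  then show ?thesis unfolding hook_lengths_def using i ji by (metis (mono_tags, lifting) mem_Collect_eq)
qed

lemma closed_sub_multiples:
  fixes X :: "nat set"
  assumes cl: "\<forall>x\<in>X. t \<le> x \<longrightarrow> x - t \<in> X" and b: "b \<in> X"
  shows "m * t \<le> b \<Longrightarrow> b - m * t \<in> X"
proof (induction m)
  case (Suc k)
  then have "b - k * t \<in> X" "t \<le> b - k * t" by (simp_all add: algebra_simps)
  then have "b - k * t - t \<in> X" using cl by blast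
  then show ?case by (simp add: algebra_simps)
qed (simp add: b)

lemma core_iff_beta_closed:
  assumes P: "is_partition la" and t: "0 < t"
  shows "is_core t la \<longleftrightarrow> (\<forall>x\<in>beta la. t \<le> x \<longrightarrow> x - t \<in> beta la)"
proof
  assume core: "is_core t la"
  show "\<forall>x\<in>beta la. t \<le> x \<longrightarrow> x - t \<in> beta la"
  proof (intro ballI impI)
    fix x assume x: "x \<in> beta la" "t \<le> x"
    show "x - t \<in> beta la"
    proof (rule ccontr)
      assume nb: "x - t \<notin> beta la"
      obtain i where i: "i < length la" "x = bnum la i" using x(1) beta_bnum[OF P] by auto
      have "bnum la i - (x - t) \<in> hook_lengths la"
        by (rule beta_gap_is_hook[OF P i(1)]) (use nb i t x in auto)
      then have "t \<in> hook_lengths la" using i x by simp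
      then show False using core unfolding is_core_def by auto
    qed
  qed
next
  assume cl: "\<forall>x\<in>beta la. t \<le> x \<longrightarrow> x - t \<in> beta la"
  show "is_core t la" unfolding is_core_def
  proof
    fix h assume "h \<in> hook_lengths la"
    then obtain i j where ij: "i < length la" "j < la!i" "h = hook la i j"
      unfolding hook_lengths_def by auto
    obtain c where c: "c \<notin> beta la" "c < bnum la i" "h = bnum la i - c"
      using hook_is_beta_gap[OF P ij(1) ij(2)] ij(3) by auto
    have bi: "bnum la i \<in> beta la" using beta_bnum[OF P] ij(1) by simp
    show "\<not> t dvd h"
    proof
      assume "t dvd h"
      then obtain m where m: "h = m * t" by (metis dvdE mult.commute)
      text \<open>Walking down from \<open>bnum la i\<close> in steps of \<open>t\<close> would reach the non-beta number \<open>c\<close>.\<close>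
      have "bnum la i - m * t \<in> beta la" using closed_sub_multiples[OF cl bi, of m] c m by simp
      moreover have "bnum la i - m * t = c" using c m by simp
      ultimately show False using c(1) by simp
    qed
  qed
qed

lemma bnum_list_sorted:
  assumes P: "is_partition la"
  shows "sorted_wrt (<) (rev (map (bnum la) [0..<length la]))"
  unfolding sorted_wrt_rev using bnum_strict[OF P]
  by (auto simp: sorted_wrt_iff_nth_less)

lemma beta_inj:
  assumes P: "is_partition la" and Q: "is_partition mu" and E: "beta la = beta mu"
  shows "la = mu"
proof -
  define xs where "xs = rev (map (bnum la) [0..<length la])"
  define ys where "ys = rev (map (bnum mu) [0..<length mu])"
  have "set xs = beta la" unfolding xs_def beta_bnum[OF P] by auto
  moreover have "set ys = beta mu" unfolding ys_def beta_bnum[OF Q] by auto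
  ultimately have "set xs = set ys" using E by simp
  moreover have "sorted xs" "distinct xs" using bnum_list_sorted[OF P] unfolding xs_def strict_sorted_iff by auto
  moreover have "sorted ys" "distinct ys" using bnum_list_sorted[OF Q] unfolding ys_def strict_sorted_iff by auto
  ultimately have "xs = ys" by (intro sorted_distinct_set_unique) auto
  then have eq: "map (bnum la) [0..<length la] = map (bnum mu) [0..<length mu]" unfolding xs_def ys_def by simp
  then have len: "length la = length mu" using length_map length_upt by (metis diff_zero)
  have "bnum la i = bnum mu i" if i: "i < length la" for i
  proof -
    have "map (bnum la) [0..<length la] ! i = map (bnum mu) [0..<length mu] ! i" using eq by simp
    then show "bnum la i = bnum mu i" using i len by simp
  qed
  then have "la!i = mu!i" if "i < length la" for i unfolding bnum_def using len that by fastforce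
  then show ?thesis using len by (simp add: nth_equalityI)
qed

lemma strict_dec_gap:
  assumes "sorted_wrt (\<lambda>x y. y < x) (xs::nat list)"
  shows "i + d < length xs \<Longrightarrow> xs!(i+d) + d \<le> xs!i"
proof (induction d)
  case (Suc d)
  have "xs!(i + Suc d) < xs!(i+d)" using assms Suc.prems by (simp add: sorted_wrt_iff_nth_less)
  then show ?case using Suc by simp
qed simp

text \<open>Every finite set of positive integers is the beta set of a partition: subtract
  \<open>0, 1, 2, \<dots>\<close> from its elements listed increasingly.\<close>
lemma beta_exists:
  assumes F: "finite B" and pos: "\<And>x. x \<in> B \<Longrightarrow> 0 < x"
  shows "\<exists>la. is_partition la \<and> beta la = B"
proof -
  define xs where "xs = rev (sorted_list_of_set B)"
  define n where "n = length xs"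
  have sd: "sorted_wrt (\<lambda>x y. y < x) xs" unfolding xs_def sorted_wrt_rev
    using sorted_list_of_set.strict_sorted_key_list_of_set by blast
  have sx: "set xs = B" unfolding xs_def using F by simp
  have gap: "\<And>i j. i \<le> j \<Longrightarrow> j < n \<Longrightarrow> xs!j + (j - i) \<le> xs!i"
    using strict_dec_gap[OF sd] n_def by (metis le_add_diff_inverse)
  have low: "\<And>i. i < n \<Longrightarrow> n - i \<le> xs!i"
  proof -
    fix i assume i: "i < n"
    have "xs!(n-1) \<in> set xs" using i n_def by simp
    then have "0 < xs!(n-1)" using pos sx by blast
    then show "n - i \<le> xs!i" using gap[of i "n-1"] i by linarith
  qed
  define la where "la = map (\<lambda>i. xs!i - (n - 1 - i)) [0..<n]"
  have len: "length la = n" unfolding la_def by simp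
  have lai: "\<And>i. i < n \<Longrightarrow> la!i = xs!i - (n - 1 - i)" unfolding la_def by simp
  have P: "is_partition la" unfolding is_partition_def
  proof
    show "sorted_wrt (\<ge>) la" unfolding sorted_wrt_iff_nth_less len
    proof (intro allI impI)
      fix i j assume ij: "i < j" "j < n"
      then show "la!j \<le> la!i" using lai[of i] lai[of j] gap[of i j] low[of j] by simp
    qed
    show "\<forall>x\<in>set la. 0 < x"
    proof
      fix x assume "x \<in> set la"
      then obtain i where "i < n" "x = la!i" using len by (metis in_set_conv_nth)
      then show "0 < x" using lai low by fastforce
    qed
  qed
  have "\<And>i. i < n \<Longrightarrow> bnum la i = xs!i" unfolding bnum_def len using lai low by fastforce
  then have "beta la = (\<lambda>i. xs!i) ` {..<n}" unfolding beta_bnum[OF P] len by auto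
  also have "\<dots> = set xs" unfolding n_def by (auto simp: in_set_conv_nth)
  finally show ?thesis using P sx by blast
qed

lemma kappa_spec_of:
  assumes "finite (T s)" "\<And>x. x \<in> T s \<Longrightarrow> 0 < x"
  shows "is_partition (kappa s) \<and> beta (kappa s) = T s"
proof -
  have "\<exists>!la. is_partition la \<and> beta la = T s"
    using beta_exists[OF assms] beta_inj by blast
  then show ?thesis unfolding kappa_def by (rule theI')
qed

lemma sum_reflect_gauss: "2 * (\<Sum>i<n. n - Suc i) = n * (n - 1::nat)"
proof (induction n)
  case (Suc n)
  have "(\<Sum>i<Suc n. Suc n - Suc i) = (Suc n - Suc 0) + (\<Sum>i<n. Suc n - Suc (Suc i))"
    by (rule sum.lessThan_Suc_shift)
  then have "(\<Sum>i<Suc n. Suc n - Suc i) = n + (\<Sum>i<n. n - Suc i)" by simp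
  then show ?case using Suc by (cases n) (auto simp: algebra_simps)
qed simp

text \<open>The size of a partition in terms of its beta set \<open>X\<close> with \<open>n\<close> elements is
  \<open>\<Sum>X - n(n-1)/2\<close>; we work with twice this quantity over the integers.\<close>
definition twice_size :: "nat set \<Rightarrow> int" where
  "twice_size X = 2 * int (\<Sum>X) - int (card X) * (int (card X) - 1)"

lemma psize_twice_size:
  assumes P: "is_partition la"
  shows "int (2 * psize la) = twice_size (beta la)"
proof -
  define n where "n = length la"
  have "\<Sum>(beta la) = (\<Sum>i<n. bnum la i)"
    unfolding beta_bnum[OF P] n_def by (simp add: sum.reindex[OF bnum_inj[OF P]])
  also have "\<dots> = (\<Sum>i<n. la!i) + (\<Sum>i<n. n - 1 - i)"
    unfolding bnum_def n_def by (rule sum.distrib)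
  also have "(\<Sum>i<n. la!i) = psize la"
    unfolding psize_def n_def by (simp add: sum_list_sum_nth atLeast0LessThan)
  finally have "2 * \<Sum>(beta la) = 2 * psize la + n * (n - 1)"
    using sum_reflect_gauss[of n] by simp
  then have "int (2 * \<Sum>(beta la)) = int (2 * psize la) + int n * int (n - 1)" by simp
  moreover have "int n * int (n - 1) = int n * (int n - 1)" by (cases n) auto
  ultimately show ?thesis unfolding twice_size_def card_beta[OF P] n_def[symmetric] by simp
qed

lemma conj_len: "length (conjugate la) = (if la = [] then 0 else la!0)"
  unfolding conjugate_def by (simp add: hd_conv_nth)

lemma conj_nth: "j < length (conjugate la) \<Longrightarrow> conjugate la ! j = col_len la j"
  unfolding conjugate_def by (auto simp: hd_conv_nth split: if_splits)

lemma col_len_mono: "j \<le> j' \<Longrightarrow> col_len la j' \<le> col_len la j"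
  unfolding col_len_card by (rule card_mono) auto

lemma col_len_pos: "is_partition la \<Longrightarrow> la \<noteq> [] \<Longrightarrow> j < la!0 \<Longrightarrow> 0 < col_len la j"
  unfolding col_len_card by (subst card_gt_0_iff) auto

lemma conj_partition:
  assumes P: "is_partition la"
  shows "is_partition (conjugate la)"
  unfolding is_partition_def
proof
  show "sorted_wrt (\<ge>) (conjugate la)" unfolding sorted_wrt_iff_nth_less
  proof (intro allI impI)
    fix i j assume "i < j" "j < length (conjugate la)"
    then show "conjugate la ! j \<le> conjugate la ! i"
      using conj_nth[of i la] conj_nth[of j la] col_len_mono[of i j la] by simp
  qed
  show "\<forall>x\<in>set (conjugate la). 0 < x"
  proof
    fix x assume "x \<in> set (conjugate la)"
    then obtain j where j: "j < length (conjugate la)" "x = conjugate la ! j" by (metis in_set_conv_nth)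
    then have "la \<noteq> []" "j < la!0" using conj_len[of la] by (auto split: if_splits)
    then show "0 < x" using j conj_nth col_len_pos[OF P] by simp
  qed
qed

lemma col_len_conj:
  assumes P: "is_partition la" and i: "i < length la"
  shows "col_len (conjugate la) i = la!i"
proof -
  have ne: "la \<noteq> []" using i by auto
  have "{j. j < length (conjugate la) \<and> i < conjugate la ! j} = {j. j < la!0 \<and> i < col_len la j}"
    using conj_len[of la] conj_nth[of _ la] ne by auto
  also have "\<dots> = {j. j < la!0 \<and> j < la!i}" using in_row_iff_in_col[OF P i] by auto
  also have "\<dots> = {..<la!i}" using part_mono[OF P, of 0 i] i by auto
  finally show ?thesis unfolding col_len_card by simp
qed

text \<open>Transposition maps box \<open>(i, j)\<close> of the conjugate to box \<open>(j, i)\<close> with the same hook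
  length; hence conjugation preserves cores and size.\<close>
lemma conj_hooks:
  assumes P: "is_partition la"
  shows "hook_lengths (conjugate la) \<subseteq> hook_lengths la"
proof
  fix h assume "h \<in> hook_lengths (conjugate la)"
  then obtain i j where ij: "i < length (conjugate la)" "j < conjugate la ! i" "h = hook (conjugate la) i j"
    unfolding hook_lengths_def by auto
  have ci: "conjugate la ! i = col_len la i" using conj_nth ij(1) by simp
  have jn: "j < length la" using ij(2) ci col_len_le[of la i] by simp
  have cj: "col_len (conjugate la) j = la!j" using col_len_conj[OF P jn] .
  have il: "i < la!j" using in_row_iff_in_col[OF P jn] ij(2) ci by simp
  have "h = hook la j i" unfolding ij(3) hook_def ci cj by simp
  then show "h \<in> hook_lengths la" unfolding hook_lengths_def using jn il by blast
qed

lemma conj_core: "is_partition la \<Longrightarrow> is_core t la \<Longrightarrow> is_core t (conjugate la)"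
  unfolding is_core_def using conj_hooks by blast

lemma conj_sss: "is_sss_core s la \<Longrightarrow> is_sss_core s (conjugate la)"
  unfolding is_sss_core_def using conj_core conj_partition by blast

lemma col_len_sum: "col_len la j = (\<Sum>i<length la. of_bool (j < la!i))"
proof -
  have "{i. i < length la \<and> j < la!i} = {..<length la} \<inter> {i. j < la!i}" by auto
  then show ?thesis unfolding col_len_card by simp
qed

lemma conj_psize:
  assumes P: "is_partition la"
  shows "psize (conjugate la) = psize la"
proof (cases "la = []")
  case True then show ?thesis unfolding conjugate_def psize_def by simp
next
  case False
  define L where "L = la!0"
  define n where "n = length la"
  have "psize (conjugate la) = (\<Sum>j<L. col_len la j)"
    unfolding psize_def conjugate_def L_def using False by (simp add: hd_conv_nth sum_list_sum_nth atLeast0LessThan)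
  also have "\<dots> = (\<Sum>j<L. \<Sum>i<n. (of_bool (j < la!i)::nat))" unfolding col_len_sum n_def by simp
  also have "\<dots> = (\<Sum>i<n. \<Sum>j<L. (of_bool (j < la!i)::nat))" by (rule sum.swap)
  also have "\<dots> = (\<Sum>i<n. la!i)"
  proof (rule sum.cong)
    fix i assume "i \<in> {..<n}"
    then have "la!i \<le> L" using part_mono[OF P, of 0 i] n_def L_def by simp
    then have "{..<L} \<inter> {j. j < la!i} = {..<la!i}" by auto
    then show "(\<Sum>j<L. (of_bool (j < la!i)::nat)) = la!i" by simp
  qed simp
  also have "\<dots> = psize la" unfolding psize_def n_def by (simp add: sum_list_sum_nth atLeast0LessThan)
  finally show ?thesis .
qed

definition sss_repr :: "nat \<Rightarrow> nat \<Rightarrow> bool" where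
  "sss_repr s n \<longleftrightarrow> (\<exists>k1 k2 k3. n = k1*s + k2*(s+1) + k3*(s+2))"

lemma T_iff_not_repr: "n \<in> T s \<longleftrightarrow> 0 < n \<and> \<not> sss_repr s n"
  unfolding T_def sss_repr_def by auto

lemma sss_repr_iff_window: "sss_repr s n \<longleftrightarrow> (\<exists>m. m*s \<le> n \<and> n \<le> m*(s+2))"
  unfolding sss_repr_def
proof
  assume "\<exists>k1 k2 k3. n = k1*s + k2*(s+1) + k3*(s+2)"
  then obtain k1 k2 k3 where n: "n = k1*s + k2*(s+1) + k3*(s+2)" by blast
  have "n = (k1+k2+k3)*s + k2 + 2*k3" using n by (simp add: algebra_simps)
  moreover have "(k1+k2+k3)*(s+2) = (k1+k2+k3)*s + 2*k1 + 2*k2 + 2*k3" by (simp add: algebra_simps)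
  ultimately show "\<exists>m. m*s \<le> n \<and> n \<le> m*(s+2)" by (intro exI[of _ "k1+k2+k3"]) auto
next
  assume "\<exists>m. m*s \<le> n \<and> n \<le> m*(s+2)"
  then obtain m where m: "m*s \<le> n" "n \<le> m*(s+2)" by blast
  define r where "r = n - m*s"
  have r: "n = m*s + r" "r \<le> 2*m" using m unfolding r_def by (auto simp: algebra_simps)
  define k3 where "k3 = r div 2"
  define k2 where "k2 = r mod 2"
  have rr: "r = 2*k3 + k2" "k2 \<le> 1" unfolding k2_def k3_def by auto
  have le: "k2 + k3 \<le> m" using r(2) rr by (cases "k2 = 0") auto
  define k1 where "k1 = m - k2 - k3"
  have "m = k1 + k2 + k3" using le k1_def by simp
  then have "n = k1*s + k2*(s+1) + k3*(s+2)" using r(1) rr(1) by (simp add: algebra_simps)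
  then show "\<exists>k1 k2 k3. n = k1*s + k2*(s+1) + k3*(s+2)" by blast
qed

text \<open>Writing \<open>n = k(s+1) + p\<close> with \<open>p \<le> s\<close>, the number \<open>n\<close> lies in \<open>T s\<close> iff \<open>k < p\<close> and
  \<open>p + k < s\<close>: the elements of \<open>T s\<close> form a triangle in the \<open>(k, p)\<close>-plane.\<close>
lemma T_char:
  assumes s: "0 < s"
  shows "n \<in> T s \<longleftrightarrow> n div (s+1) < n mod (s+1) \<and> n mod (s+1) + n div (s+1) < s"
proof -
  define k where "k = n div (s+1)"
  define p where "p = n mod (s+1)"
  have n: "n = k*(s+1) + p" unfolding k_def p_def by (rule div_mult_mod_eq[symmetric])
  have ps: "p \<le> s" unfolding p_def by (metis less_Suc_eq_le mod_less_divisor zero_less_Suc Suc_eq_plus1)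
  have Tn: "n \<in> T s \<longleftrightarrow> 0 < n \<and> \<not> (\<exists>m. m*s \<le> n \<and> n \<le> m*(s+2))"
    unfolding T_iff_not_repr sss_repr_iff_window ..
  show ?thesis unfolding k_def[symmetric] p_def[symmetric] Tn
  proof
    assume a: "0 < n \<and> \<not> (\<exists>m. m*s \<le> n \<and> n \<le> m*(s+2))"
    show "k < p \<and> p + k < s"
    proof (rule ccontr)
      assume "\<not> (k < p \<and> p + k < s)"
      then consider "p \<le> k" | "s \<le> p + k" by linarith
      then show False
      proof cases
        case 1
        have "k*s \<le> n" "n \<le> k*(s+2)" using n 1 by (auto simp: algebra_simps)
        then show False using a by blast
      next
        case 2
        have "(k+1)*s \<le> n" using n 2 by (simp add: algebra_simps)
        moreover have "n \<le> (k+1)*(s+2)" using n ps by (simp add: algebra_simps)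
        ultimately show False using a by blast
      qed
    qed
  next
    assume a: "k < p \<and> p + k < s"
    show "0 < n \<and> \<not> (\<exists>m. m*s \<le> n \<and> n \<le> m*(s+2))"
    proof (intro conjI notI)
      show "0 < n" using n a by simp
      assume "\<exists>m. m*s \<le> n \<and> n \<le> m*(s+2)"
      then obtain m where m: "m*s \<le> n" "n \<le> m*(s+2)" by blast
      show False
      proof (cases "m \<le> k")
        case True
        then have "m*(s+2) \<le> k*(s+2)" by (rule mult_le_mono1)
        then show False using m n a by (simp add: algebra_simps)
      next
        case False
        then have "(k+1)*s \<le> m*s" by (intro mult_le_mono1) simp
        then show False using m n a by (simp add: algebra_simps)
      qed
    qed
  qed
qed

definition cell :: "nat \<Rightarrow> nat \<times> nat \<Rightarrow> nat" where
  "cell s kp = fst kp * (s+1) + snd kp"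

lemma cell_div: "p \<le> s \<Longrightarrow> cell s (k,p) div (s+1) = k"
  unfolding cell_def fst_conv snd_conv by (metis add.commute div_mult_self1 div_less le_imp_less_Suc
      Suc_eq_plus1 add_0 zero_neq_one add_eq_0_iff_both_eq_0)

lemma cell_mod: "p \<le> s \<Longrightarrow> cell s (k,p) mod (s+1) = p"
  unfolding cell_def fst_conv snd_conv by (metis add.commute mod_mult_self1 mod_less le_imp_less_Suc
      Suc_eq_plus1)

lemma T_cell_iff:
  assumes "0 < s" "p \<le> s"
  shows "cell s (k,p) \<in> T s \<longleftrightarrow> k < p \<and> p + k < s"
  using T_char[OF assms(1)] cell_div[OF assms(2)] cell_mod[OF assms(2)] by simp

definition row :: "nat \<Rightarrow> nat set \<Rightarrow> nat \<Rightarrow> nat set" where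
  "row s X k = {p. k < p \<and> p + k < s \<and> cell s (k,p) \<in> X}"

lemma row_subset: "row s X k \<subseteq> {k+1..<s-k}"
  unfolding row_def by auto

lemma row_finite: "finite (row s X k)"
  by (rule finite_subset[OF row_subset]) simp

lemma row_card_le: "card (row s X k) \<le> s - 1 - 2*k"
proof -
  have "card (row s X k) \<le> card {k+1..<s-k}" by (rule card_mono[OF _ row_subset]) simp
  then show ?thesis by simp
qed

lemma row_T: "0 < s \<Longrightarrow> row s (T s) k = {k+1..<s-k}"
  unfolding row_def using T_cell_iff by auto

lemma card_row_T: "0 < s \<Longrightarrow> card (row s (T s) k) = s - 1 - 2*k"
  using row_T by simp

lemma subset_T_rows:
  assumes s: "0 < s" and XT: "X \<subseteq> T s"
  shows "X = cell s ` Sigma {..<s} (row s X)" and "inj_on (cell s) (Sigma {..<s} (row s X))"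
proof -
  show "inj_on (cell s) (Sigma {..<s} (row s X))"
  proof (rule inj_onI)
    fix x y assume x: "x \<in> Sigma {..<s} (row s X)" and y: "y \<in> Sigma {..<s} (row s X)"
      and e: "cell s x = cell s y"
    obtain k p k' p' where kp: "x = (k,p)" "y = (k',p')" by (cases x, cases y)
    have le: "p \<le> s" "p' \<le> s" using x y kp unfolding row_def by auto
    have "k = k'" using arg_cong[OF e, of "\<lambda>z. z div (s+1)"] cell_div[OF le(1)] cell_div[OF le(2)] kp by simp
    moreover have "p = p'" using arg_cong[OF e, of "\<lambda>z. z mod (s+1)"] cell_mod[OF le(1)] cell_mod[OF le(2)] kp by simp
    ultimately show "x = y" using kp by simp
  qed
  show "X = cell s ` Sigma {..<s} (row s X)"
  proof
    show "X \<subseteq> cell s ` Sigma {..<s} (row s X)"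
    proof
      fix x assume x: "x \<in> X"
      define k p where "k = x div (s+1)" and "p = x mod (s+1)"
      have "x = cell s (k,p)" unfolding cell_def fst_conv snd_conv k_def p_def
        by (rule div_mult_mod_eq[symmetric])
      moreover have "k < p" "p + k < s" using T_char[OF s] x XT unfolding k_def p_def by auto
      ultimately show "x \<in> cell s ` Sigma {..<s} (row s X)" unfolding row_def using x by auto
    qed
  qed (auto simp: row_def)
qed

lemma T_finite: "0 < s \<Longrightarrow> finite (T s)"
proof -
  assume s: "0 < s"
  have "finite (Sigma {..<s} (row s (T s)))" by (simp add: row_finite)
  then show ?thesis by (subst subset_T_rows(1)[OF s order_refl]) (rule finite_imageI)
qed

lemma rows_eq:
  assumes s: "0 < s" and "X \<subseteq> T s" "Y \<subseteq> T s" and "\<And>k. k < s \<Longrightarrow> row s X k = row s Y k"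
  shows "X = Y"
proof -
  have "Sigma {..<s} (row s X) = Sigma {..<s} (row s Y)" using assms(4) by auto
  then show ?thesis using subset_T_rows(1)[OF s assms(2)] subset_T_rows(1)[OF s assms(3)] by simp
qed

lemma sum_rows:
  assumes s: "0 < s" and XT: "X \<subseteq> T s"
  shows "\<Sum>X = (\<Sum>k<s. \<Sum>p\<in>row s X k. k*(s+1)+p)"
    and "card X = (\<Sum>k<s. card (row s X k))"
proof -
  note X = subset_T_rows[OF s XT]
  have "\<Sum>X = (\<Sum>kp\<in>Sigma {..<s} (row s X). cell s kp)"
    by (subst X(1)) (rule sum.reindex[OF X(2), unfolded comp_def])
  also have "\<dots> = (\<Sum>(k,p)\<in>Sigma {..<s} (row s X). cell s (k,p))"
    by (rule sum.cong) auto
  also have "\<dots> = (\<Sum>k<s. \<Sum>p\<in>row s X k. cell s (k,p))"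
    by (rule sum.Sigma[symmetric]) (auto simp: row_finite)
  finally show "\<Sum>X = (\<Sum>k<s. \<Sum>p\<in>row s X k. k*(s+1)+p)" unfolding cell_def by simp
  have "card X = card (Sigma {..<s} (row s X))" by (subst X(1)) (rule card_image[OF X(2)])
  also have "\<dots> = (\<Sum>k<s. card (row s X k))" by (rule card_SigmaI) (auto simp: row_finite)
  finally show "card X = (\<Sum>k<s. card (row s X k))" .
qed

definition sss_closed :: "nat \<Rightarrow> nat set \<Rightarrow> bool" where
  "sss_closed s X \<longleftrightarrow> (\<forall>x\<in>X. \<forall>t\<in>{s, s+1, s+2}. t \<le> x \<longrightarrow> x - t \<in> X)"

lemma sss_core_iff_closed:
  assumes s: "0 < s"
  shows "is_sss_core s mu \<longleftrightarrow> is_partition mu \<and> sss_closed s (beta mu)"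
proof -
  have "is_partition mu \<Longrightarrow> (\<forall>t\<in>{s, s+1, s+2}. is_core t mu) \<longleftrightarrow> sss_closed s (beta mu)"
    using core_iff_beta_closed s unfolding sss_closed_def by auto
  then show ?thesis unfolding is_sss_core_def by auto
qed

lemma sss_repr_0: "sss_repr s 0"
  unfolding sss_repr_def by auto

lemma sss_repr_step:
  assumes "sss_repr s a" "t \<in> {s, s+1, s+2}"
  shows "sss_repr s (a + t)"
proof -
  obtain k1 k2 k3 where a: "a = k1*s + k2*(s+1) + k3*(s+2)" using assms(1) unfolding sss_repr_def by blast
  consider "t = s" | "t = s+1" | "t = s+2" using assms(2) by auto
  then show ?thesis
  proof cases
    case 1 then have "a + t = (k1+1)*s + k2*(s+1) + k3*(s+2)" using a by (simp add: algebra_simps)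
    then show ?thesis unfolding sss_repr_def by blast
  next
    case 2 then have "a + t = k1*s + (k2+1)*(s+1) + k3*(s+2)" using a by (simp add: algebra_simps)
    then show ?thesis unfolding sss_repr_def by blast
  next
    case 3 then have "a + t = k1*s + k2*(s+1) + (k3+1)*(s+2)" using a by (simp add: algebra_simps)
    then show ?thesis unfolding sss_repr_def by blast
  qed
qed

lemma sss_repr_pred:
  assumes "sss_repr s n" "0 < n"
  shows "\<exists>t\<in>{s, s+1, s+2}. t \<le> n \<and> sss_repr s (n - t)"
proof -
  obtain k1 k2 k3 where n: "n = k1*s + k2*(s+1) + k3*(s+2)" using assms(1) unfolding sss_repr_def by blast
  consider (a) m where "k1 = Suc m" | (b) m where "k2 = Suc m" | (c) m where "k3 = Suc m"
  proof -
    have "k1 \<noteq> 0 \<or> k2 \<noteq> 0 \<or> k3 \<noteq> 0" using assms(2) n by auto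
    then show ?thesis using that by (metis not0_implies_Suc)
  qed
  then show ?thesis
  proof cases
    case a then have "n - s = m*s + k2*(s+1) + k3*(s+2)" "s \<le> n" using n by simp_all
    then show ?thesis unfolding sss_repr_def by blast
  next
    case b then have "n - (s+1) = k1*s + m*(s+1) + k3*(s+2)" "s+1 \<le> n" using n by simp_all
    then show ?thesis unfolding sss_repr_def by blast
  next
    case c then have "n - (s+2) = k1*s + k2*(s+1) + m*(s+2)" "s+2 \<le> n" using n by simp_all
    then show ?thesis unfolding sss_repr_def by blast
  qed
qed

lemma closed_subset_T:
  assumes s: "0 < s" and cl: "sss_closed s X" and pos: "\<And>x. x \<in> X \<Longrightarrow> 0 < x"
  shows "X \<subseteq> T s"
proof
  fix x assume "x \<in> X"
  then have "\<not> sss_repr s x"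
  proof (induction x rule: less_induct)
    case (less x)
    show ?case
    proof
      assume "sss_repr s x"
      then obtain t where t: "t \<in> {s, s+1, s+2}" "t \<le> x" "sss_repr s (x - t)"
        using sss_repr_pred pos[OF less.prems] by blast
      have "x - t \<in> X" using cl less.prems t unfolding sss_closed_def by blast
      moreover have "x - t < x" using t s pos[OF less.prems] by auto
      ultimately show False using less.IH t(3) by blast
    qed
  qed
  then show "x \<in> T s" using T_iff_not_repr pos \<open>x \<in> X\<close> by blast
qed

lemma T_closed: "sss_closed s (T s)"
  unfolding sss_closed_def
proof (intro ballI impI)
  fix x t assume x: "x \<in> T s" and t: "t \<in> {s, s+1, s+2}" "t \<le> x"
  have nx: "\<not> sss_repr s x" using x T_iff_not_repr by blast
  have x_eq: "x = (x - t) + t" using t(2) by simp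
  have "0 < x - t" using nx sss_repr_step[OF sss_repr_0 t(1)] x_eq by (cases "x - t = 0") auto
  moreover have "\<not> sss_repr s (x - t)" using nx sss_repr_step[OF _ t(1), of "x - t"] x_eq by auto
  ultimately show "x - t \<in> T s" unfolding T_iff_not_repr by blast
qed

lemma T_pos: "x \<in> T s \<Longrightarrow> 0 < x"
  unfolding T_def by simp

lemma kappa_spec: "0 < s \<Longrightarrow> is_partition (kappa s) \<and> beta (kappa s) = T s"
  using kappa_spec_of T_finite T_pos by blast

lemma kappa_sss: "0 < s \<Longrightarrow> is_sss_core s (kappa s)"
  using sss_core_iff_closed kappa_spec T_closed by simp

lemma sss_beta_subset_T: "0 < s \<Longrightarrow> is_sss_core s mu \<Longrightarrow> beta mu \<subseteq> T s"
  using sss_core_iff_closed closed_subset_T beta_pos by metis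

text \<open>Closure makes the rows shrink: if \<open>p\<close> lies in row \<open>k+1\<close> then \<open>p-1, p, p+1\<close> lie in row \<open>k\<close>
  (subtract \<open>s+2\<close>, \<open>s+1\<close>, \<open>s\<close> respectively).\<close>
lemma row_erode:
  assumes cl: "sss_closed s X" and p: "p \<in> row s X (k+1)"
  shows "p - 1 \<in> row s X k \<and> p \<in> row s X k \<and> p + 1 \<in> row s X k"
proof -
  have pk: "k + 1 < p" "p + (k+1) < s" "(k+1)*(s+1) + p \<in> X" using p unfolding row_def cell_def by auto
  define x where "x = (k+1)*(s+1) + p"
  have e1: "x - (s+1) = k*(s+1) + p" unfolding x_def by (simp add: algebra_simps)
  have e2: "x - s = k*(s+1) + (p+1)" unfolding x_def by (simp add: algebra_simps)
  have e3: "x - (s+2) = k*(s+1) + (p-1)" unfolding x_def using pk by (simp add: algebra_simps)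
  have "s + 2 \<le> x" unfolding x_def using pk by (simp add: algebra_simps)
  then have "x - (s+1) \<in> X" "x - s \<in> X" "x - (s+2) \<in> X"
    using cl pk(3) unfolding sss_closed_def x_def by auto
  then show ?thesis unfolding row_def cell_def using e1 e2 e3 pk by auto
qed

lemma row_card_step:
  assumes cl: "sss_closed s X" and ne: "0 < card (row s X (k+1))"
  shows "card (row s X (k+1)) + 2 \<le> card (row s X k)"
proof -
  define R where "R = row s X (k+1)"
  have fin: "finite R" unfolding R_def by (rule row_finite)
  have Rne: "R \<noteq> {}" using ne R_def by auto
  define a b where "a = Min R" and "b = Max R"
  have ab: "a \<in> R" "b \<in> R" "a \<le> b" using fin Rne a_def b_def by auto
  have a1: "0 < a" using ab unfolding R_def row_def by auto
  have sub: "insert (a-1) (insert (b+1) R) \<subseteq> row s X k"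
    using row_erode[OF cl] ab unfolding R_def by blast
  have "a - 1 \<notin> R" using fin a_def a1 by (metis Min_le diff_less less_numeral_extra(1) not_le)
  moreover have "b + 1 \<notin> R" using fin b_def by (metis Max_ge add_le_same_cancel1 not_one_le_zero)
  ultimately have "card (insert (a-1) (insert (b+1) R)) = card R + 2" using fin ab(3) by simp
  moreover have "card (insert (a-1) (insert (b+1) R)) \<le> card (row s X k)"
    using sub row_finite card_mono by blast
  ultimately show ?thesis unfolding R_def by simp
qed
lemma insert_top_segment:
  assumes "m \<notin> R" "card R \<le> m"
  shows "insert m R = {Suc m - Suc (card R)..<Suc m} \<longleftrightarrow> R = {m - card R..<m}"
proof -
  have I: "{Suc m - Suc (card R)..<Suc m} = insert m {m - card R..<m}"
    using assms(2) by (simp add: atLeastLessThanSuc)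
  have "m \<notin> {m - card R..<m}" by simp
  then show ?thesis unfolding I using assms(1) insert_ident by metis
qed

lemma top_segment_Suc_iff_empty:
  assumes "finite R" "m \<notin> R"
  shows "R = {Suc m - card R..<Suc m} \<longleftrightarrow> R = {}"
proof
  assume R: "R = {Suc m - card R..<Suc m}"
  show "R = {}"
  proof (rule ccontr)
    assume "R \<noteq> {}"
    then have "0 < card R" using assms(1) by auto
    then have "m \<in> {Suc m - card R..<Suc m}" by auto
    then show False using R assms(2) by simp
  qed
qed simp

lemma top_segment_sum:
  "finite R \<Longrightarrow> R \<subseteq> {..<m} \<Longrightarrow>
     2 * \<Sum>R + card R * (card R + 1) \<le> 2 * m * card R \<and>
     (2 * \<Sum>R + card R * (card R + 1) = 2 * m * card R \<longleftrightarrow> R = {m - card R..<m})"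
proof (induction m arbitrary: R)
  case (Suc m)
  show ?case
  proof (cases "m \<in> R")
    case True
    define R' where "R' = R - {m}"
    have R': "finite R'" "R' \<subseteq> {..<m}" "m \<notin> R'" "R = insert m R'"
      using Suc.prems True unfolding R'_def by auto
    have cR: "card R = Suc (card R')" using card.remove[OF Suc.prems(1) True] unfolding R'_def by simp
    have sR: "\<Sum>R = \<Sum>R' + m" using sum.remove[OF Suc.prems(1) True, of id] unfolding R'_def by simp
    have c'm: "card R' \<le> m" using card_mono[OF _ R'(2)] by simp
    note IH = Suc.IH[OF R'(1,2)]
    have "2 * \<Sum>R + card R * (card R + 1) \<le> 2 * Suc m * card R"
      using IH unfolding cR sR by (simp add: algebra_simps)
    moreover have "(2 * \<Sum>R + card R * (card R + 1) = 2 * Suc m * card R)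
        = (2 * \<Sum>R' + card R' * (card R' + 1) = 2 * m * card R')"
      unfolding cR sR by (simp add: algebra_simps)
    moreover have "R = {Suc m - card R..<Suc m} \<longleftrightarrow> R' = {m - card R'..<m}"
      unfolding cR using insert_top_segment[OF R'(3) c'm] by (simp add: R'(4))
    ultimately show ?thesis using IH by simp
  next
    case False
    have Rf: "finite R" "R \<subseteq> {..<m}" using Suc.prems False by (auto simp: less_Suc_eq)
    note IH = Suc.IH[OF Rf]
    have "(2 * \<Sum>R + card R * (card R + 1) = 2 * Suc m * card R) \<longleftrightarrow> R = {}"
      using IH Rf(1) by auto
    then show ?thesis using IH top_segment_Suc_iff_empty[OF Rf(1) False] by simp
  qed
qed simp

text \<open>The quadratic form bounding twice the size of a partition whose beta set has row
  sizes \<open>r 0, r 1, \<dots>, r (K-1)\<close>.\<close>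
definition row_form :: "nat \<Rightarrow> nat \<Rightarrow> (nat \<Rightarrow> int) \<Rightarrow> int" where
  "row_form s K r = (\<Sum>k<K. r k * (2 * int s * (int k + 1) - r k)) - (\<Sum>k<K. r k)^2"

text \<open>The integer defect of a set with respect to the top segment of the same size.\<close>
definition top_defect :: "nat \<Rightarrow> nat set \<Rightarrow> int" where
  "top_defect m R = 2 * int m * int (card R) - int (card R) * (int (card R) + 1) - 2 * int (\<Sum>R)"

lemma top_defect:
  assumes "finite R" "R \<subseteq> {..<m}"
  shows "0 \<le> top_defect m R" and "top_defect m R = 0 \<longleftrightarrow> R = {m - card R..<m}"
proof -
  define c S where "c = card R" and "S = \<Sum>R"
  note ts = top_segment_sum[OF assms, folded c_def S_def]
  have "int (2 * S + c * (c + 1)) \<le> int (2 * m * c)" using ts by linarith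
  then show "0 \<le> top_defect m R" unfolding top_defect_def c_def[symmetric] S_def[symmetric]
    by (simp add: algebra_simps)
  have "int (2 * S + c * (c + 1)) = int (2 * m * c) \<longleftrightarrow> R = {m - c..<m}" using ts by linarith
  moreover have "top_defect m R = int (2 * m * c) - int (2 * S + c * (c + 1))"
    unfolding top_defect_def c_def[symmetric] S_def[symmetric] by (simp add: algebra_simps)
  ultimately show "top_defect m R = 0 \<longleftrightarrow> R = {m - card R..<m}" unfolding c_def by linarith
qed

text \<open>Bounding each row by the top segment of the same size bounds twice the size of the
  partition by the row form of the row sizes, with equality iff all rows are top segments.\<close>
lemma twice_size_bound:
  assumes s: "0 < s" and XT: "X \<subseteq> T s"
  shows "twice_size X \<le> row_form s s (\<lambda>k. int (card (row s X k)))"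
    and "twice_size X = row_form s s (\<lambda>k. int (card (row s X k))) \<longleftrightarrow> (\<forall>k<s. row s X k = {s - k - card (row s X k)..<s-k})"
proof -
  define c where "c k = card (row s X k)" for k
  define D where "D k = top_defect (s - k) (row s X k)" for k
  have sub: "row s X k \<subseteq> {..<s-k}" for k using row_subset by fastforce
  have D0: "\<And>k. k \<in> {..<s} \<Longrightarrow> 0 \<le> D k" unfolding D_def using top_defect(1)[OF row_finite sub] by auto
  have Deq: "\<And>k. D k = 0 \<longleftrightarrow> row s X k = {s - k - c k..<s-k}"
    unfolding D_def c_def using top_defect(2)[OF row_finite sub] by auto
  have sX: "int (\<Sum>X) = (\<Sum>k<s. int (k*(s+1)) * int (c k) + int (\<Sum>(row s X k)))"
  proof -
    have "\<Sum>X = (\<Sum>k<s. \<Sum>p\<in>row s X k. k*(s+1)+p)" by (rule sum_rows(1)[OF s XT])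
    also have "\<dots> = (\<Sum>k<s. k*(s+1) * c k + \<Sum>(row s X k))"
      unfolding c_def by (simp add: sum.distrib mult.commute)
    finally show ?thesis by simp
  qed
  have cX: "int (card X) = (\<Sum>k<s. int (c k))" using sum_rows(2)[OF s XT] unfolding c_def by simp
  have key: "row_form s s (\<lambda>k. int (c k)) - twice_size X = (\<Sum>k<s. D k)"
  proof -
    have "row_form s s (\<lambda>k. int (c k)) - twice_size X = (\<Sum>k<s. int (c k) * (2 * int s * (int k + 1) - int (c k))) - 2 * int (\<Sum>X) - (\<Sum>k<s. int (c k))"
      unfolding row_form_def twice_size_def cX by (simp add: algebra_simps power2_eq_square)
    also have "\<dots> = (\<Sum>k<s. int (c k) * (2 * int s * (int k + 1) - int (c k)) - 2 * (int (k*(s+1)) * int (c k) + int (\<Sum>(row s X k))) - int (c k))"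
      unfolding sX by (simp add: sum_subtractf sum_distrib_left)
    also have "\<dots> = (\<Sum>k<s. D k)"
    proof (rule sum.cong)
      fix k assume "k \<in> {..<s}"
      then have "int (s - k) = int s - int k" by simp
      then show "int (c k) * (2 * int s * (int k + 1) - int (c k)) - 2 * (int (k*(s+1)) * int (c k) + int (\<Sum>(row s X k))) - int (c k) = D k"
        unfolding D_def top_defect_def c_def by (simp add: algebra_simps)
    qed simp
    finally show ?thesis .
  qed
  have "0 \<le> (\<Sum>k<s. D k)" using D0 by (rule sum_nonneg)
  then show "twice_size X \<le> row_form s s (\<lambda>k. int (card (row s X k)))" using key unfolding c_def by simp
  have "(\<Sum>k<s. D k) = 0 \<longleftrightarrow> (\<forall>k\<in>{..<s}. D k = 0)" using D0 by (intro sum_nonneg_eq_0_iff) auto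
  then show "twice_size X = row_form s s (\<lambda>k. int (card (row s X k))) \<longleftrightarrow> (\<forall>k<s. row s X k = {s - k - card (row s X k)..<s-k})"
    using key Deq unfolding c_def by auto
qed



lemma sum_int_id: "2 * (\<Sum>k<K. int k) = int K * (int K - 1)"
  by (induction K) (auto simp: algebra_simps)

lemma sum_int_sq: "6 * (\<Sum>k<K. (int k)^2) = int K * (int K - 1) * (2 * int K - 1)"
  by (induction K) (auto simp: algebra_simps power2_eq_square)

text \<open>The staircase profile \<open>2K-1, 2K-3, \<dots>, 1\<close>: the shortest row sizes allowed for a
  closed set with exactly \<open>K\<close> nonempty rows.\<close>
definition stair :: "nat \<Rightarrow> nat \<Rightarrow> int" where
  "stair K k = 2 * int K - 1 - 2 * int k"

lemma stair_sum: "(\<Sum>k<K. stair K k) = (int K)^2"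
proof -
  have "(\<Sum>k<K. stair K k) = int K * (2 * int K - 1) - 2 * (\<Sum>k<K. int k)"
    unfolding stair_def by (simp add: sum_subtractf sum_distrib_left)
  then show ?thesis using sum_int_id[of K] by (simp add: algebra_simps power2_eq_square)
qed

lemma stair_moment: "6 * (\<Sum>k<K. stair K k * (int k + 1)) = int K * (int K + 1) * (2 * int K + 1)"
proof -
  have "(\<Sum>k<K. stair K k * (int k + 1))
      = (\<Sum>k<K. (2 * int K - 1) + (2 * int K - 3) * int k - 2 * (int k)^2)"
    by (rule sum.cong) (simp_all add: stair_def algebra_simps power2_eq_square)
  also have "\<dots> = int K * (2 * int K - 1) + (2 * int K - 3) * (\<Sum>k<K. int k) - 2 * (\<Sum>k<K. (int k)^2)"
    by (simp add: sum.distrib sum_subtractf sum_distrib_left)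
  finally show ?thesis using sum_int_id[of K] sum_int_sq[of K] by algebra
qed

lemma stair_sq_sum: "3 * (\<Sum>k<K. (stair K k)^2) = int K * (4 * (int K)^2 - 1)"
proof -
  have "(\<Sum>k<K. (stair K k)^2) = (\<Sum>k<K. (2 * int K - 1)^2 - 4 * (2 * int K - 1) * int k + 4 * (int k)^2)"
    by (rule sum.cong) (simp_all add: stair_def algebra_simps power2_eq_square)
  also have "\<dots> = int K * (2 * int K - 1)^2 - 4 * (2 * int K - 1) * (\<Sum>k<K. int k) + 4 * (\<Sum>k<K. (int k)^2)"
    by (simp add: sum.distrib sum_subtractf sum_distrib_left)
  finally show ?thesis using sum_int_id[of K] sum_int_sq[of K] by algebra
qed

text \<open>The linear coefficients of the row form at the staircase: perturbing the staircase by
  \<open>e\<close> changes the row form linearly by \<open>2 \<Sum> stair_weight s K k * e k\<close>.\<close>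
definition stair_weight :: "nat \<Rightarrow> nat \<Rightarrow> nat \<Rightarrow> int" where
  "stair_weight s K k = (int s + 2) * (int k + 1) - (int K + 1)^2"

lemma stair_weight_mono: "i \<le> j \<Longrightarrow> stair_weight s K i \<le> stair_weight s K j"
  unfolding stair_weight_def by (simp add: mult_left_mono)

lemma stair_weight_sum:
  "2 * (\<Sum>k<j. stair_weight s K k) = (int s + 2) * int j * (int j + 1) - 2 * int j * (int K + 1)^2"
proof -
  have "(\<Sum>k<j. stair_weight s K k) = (int s + 2) * (\<Sum>k<j. int k + 1) - int j * (int K + 1)^2"
    unfolding stair_weight_def by (simp add: sum_subtractf sum_distrib_left)
  moreover have "2 * (\<Sum>k<j. int k + 1) = int j * (int j + 1)"
    by (induction j) (auto simp: algebra_simps)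
  ultimately show ?thesis by algebra
qed

lemma stair_weight_total: "2 * (\<Sum>k<K. stair_weight s K k) = int K * (int K + 1) * (int s - 2 * int K)"
  using stair_weight_sum[of s K K] by algebra

lemma row_form_cong: "(\<And>k. k < K \<Longrightarrow> r k = r' k) \<Longrightarrow> row_form s K r = row_form s K r'"
  unfolding row_form_def by (metis (no_types, lifting) lessThan_iff sum.cong)

lemma row_form_truncate:
  assumes "K \<le> N" "\<And>k. K \<le> k \<Longrightarrow> k < N \<Longrightarrow> r k = 0"
  shows "row_form s N r = row_form s K r"
proof -
  have a: "(\<Sum>k<N. r k * (2 * int s * (int k + 1) - r k)) = (\<Sum>k<K. r k * (2 * int s * (int k + 1) - r k))"
    by (rule sum.mono_neutral_right) (use assms in auto)
  have b: "(\<Sum>k<N. r k) = (\<Sum>k<K. r k)"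
    by (rule sum.mono_neutral_right) (use assms in auto)
  show ?thesis unfolding row_form_def a b ..
qed

lemma row_form_perturb:
  "row_form s K (\<lambda>k. stair K k + e k) = row_form s K (stair K) + 2 * (\<Sum>k<K. stair_weight s K k * e k)
     - (\<Sum>k<K. (e k)^2) - (\<Sum>k<K. e k)^2"
proof -
  have "(\<Sum>k<K. (stair K k + e k) * (2 * int s * (int k + 1) - (stair K k + e k)))
     = (\<Sum>k<K. stair K k * (2 * int s * (int k + 1) - stair K k)
          + 2 * (stair_weight s K k * e k) + 2 * (int K)^2 * e k - (e k)^2)"
    by (rule sum.cong) (simp_all add: stair_weight_def stair_def algebra_simps power2_eq_square)
  also have "\<dots> = (\<Sum>k<K. stair K k * (2 * int s * (int k + 1) - stair K k))
      + 2 * (\<Sum>k<K. stair_weight s K k * e k) + 2 * (int K)^2 * (\<Sum>k<K. e k) - (\<Sum>k<K. (e k)^2)"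
    by (simp add: sum.distrib sum_subtractf sum_distrib_left)
  finally have e1: "(\<Sum>k<K. (stair K k + e k) * (2 * int s * (int k + 1) - (stair K k + e k))) = \<dots>" .
  have e2: "(\<Sum>k<K. stair K k + e k) = (int K)^2 + (\<Sum>k<K. e k)" using stair_sum by (simp add: sum.distrib)
  show ?thesis unfolding row_form_def e1 e2 stair_sum by (simp add: algebra_simps power2_eq_square)
qed

text \<open>Value of the row form at the staircase, up to a correction term.\<close>
definition stair_value :: "nat \<Rightarrow> nat \<Rightarrow> int" where
  "stair_value s K = int K * (int K + 1) * (3 * (int s)^2 - 4 * (int s + 1) * (int K - 1))"

lemma row_form_stair:
  "12 * row_form s K (stair K) + 3 * int K * (int K + 1) * (int s - 2 * int K)^2 = stair_value s K"
proof -
  have "(\<Sum>k<K. stair K k * (2 * int s * (int k + 1) - stair K k))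
      = (\<Sum>k<K. 2 * int s * (stair K k * (int k + 1)) - (stair K k)^2)"
    by (rule sum.cong) (simp_all add: algebra_simps power2_eq_square)
  then have "row_form s K (stair K) = 2 * int s * (\<Sum>k<K. stair K k * (int k + 1))
      - (\<Sum>k<K. (stair K k)^2) - (\<Sum>k<K. stair K k)^2"
    unfolding row_form_def by (simp add: sum_subtractf sum_distrib_left)
  then show ?thesis unfolding stair_value_def using stair_sum[of K] stair_moment[of K] stair_sq_sum[of K] by algebra
qed

lemma stair_value_step:
  "stair_value s (Suc K) - stair_value s K = 6 * (int K + 1) * ((int s)^2 - 2 * (int s + 1) * int K)"
  unfolding stair_value_def by (simp add: algebra_simps power2_eq_square)

lemma stair_value_mono: "2 * (K + d) \<le> s \<Longrightarrow> stair_value s K \<le> stair_value s (K + d)"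
proof (induction d)
  case (Suc d)
  then have IH: "stair_value s K \<le> stair_value s (K + d)" by simp
  have le: "2 * (int K + int d) + 2 \<le> int s" using Suc.prems by simp
  have "(int s + 1) * (2 * (int K + int d)) \<le> (int s + 1) * (int s - 2)"
    by (rule mult_left_mono) (use le in simp_all)
  then have "0 \<le> (int s)^2 - 2 * (int s + 1) * (int K + int d)" by (simp add: algebra_simps power2_eq_square)
  then have "0 \<le> 6 * (int (K+d) + 1) * ((int s)^2 - 2 * (int s + 1) * int (K+d))" by simp
  then show ?case using IH stair_value_step[of s "K+d"] by simp
qed simp

text \<open>The row sizes \<open>s-1-2k\<close> of \<open>T s\<close> are the staircase with \<open>A = s div 2\<close> steps shifted by
  \<open>s - 2A \<in> {0,1}\<close>; the shift does not change the row form.\<close>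
lemma row_form_T_rows:
  assumes A: "A = s div 2"
  shows "row_form s A (\<lambda>k. int (s - 1 - 2*k)) = row_form s A (stair A)"
proof -
  define M where "M = int s - 2 * int A"
  have "row_form s A (\<lambda>k. int (s - 1 - 2*k)) = row_form s A (\<lambda>k. stair A k + M)"
  proof (rule row_form_cong)
    fix k assume "k < A"
    then have "2*k + 1 \<le> s" using A by linarith
    then show "int (s - 1 - 2*k) = stair A k + M" unfolding stair_def M_def by simp
  qed
  also have "\<dots> = row_form s A (stair A) + 2 * (\<Sum>k<A. stair_weight s A k * M) - (\<Sum>k<A. M^2) - (\<Sum>k<A. M)^2"
    by (rule row_form_perturb)
  also have "2 * (\<Sum>k<A. stair_weight s A k * M) = M * (2 * (\<Sum>k<A. stair_weight s A k))"
    by (simp add: sum_distrib_left mult.commute mult.left_commute)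
  also have "\<dots> = M * (int A * (int A + 1) * M)" unfolding stair_weight_total M_def ..
  finally show ?thesis by (simp add: algebra_simps power2_eq_square)
qed

text \<open>For an antitone perturbation \<open>e\<close> of the staircase, the row form never exceeds the
  staircase value: Chebyshev's sum inequality bounds the linear term, and the quadratic
  terms absorb the rest.\<close>
lemma row_form_stair_bound:
  assumes mono: "\<And>i j. i \<le> j \<Longrightarrow> j < K \<Longrightarrow> e j \<le> e i"
  shows "12 * row_form s K (\<lambda>k. stair K k + e k) \<le> stair_value s K"
proof -
  define M where "M = int s - 2 * int K"
  define P where "P = (\<Sum>k<K. stair_weight s K k * e k)"
  define V where "V = (\<Sum>k<K. (e k)^2)"
  define S where "S = (\<Sum>k<K. e k)"
  define D where "D = row_form s K (\<lambda>k. stair K k + e k) - row_form s K (stair K)"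
  have D: "D = 2 * P - V - S^2" unfolding D_def P_def V_def S_def by (simp add: row_form_perturb)
  have "int K * P \<le> (\<Sum>k<K. stair_weight s K k) * S"
    using Chebyshev_sum_upper[of K "stair_weight s K" e] mono stair_weight_mono
    unfolding P_def S_def atLeast0LessThan by simp
  then have "2 * (int K * P) \<le> (2 * (\<Sum>k<K. stair_weight s K k)) * S" by simp
  then have lin: "2 * (int K * P) \<le> int K * (int K + 1) * M * S"
    unfolding stair_weight_total M_def .
  have "int K * (\<Sum>k<K. (- e k) * e k) \<le> (\<Sum>k<K. - e k) * (\<Sum>k<K. e k)"
    using Chebyshev_sum_upper[of K "\<lambda>k. - e k" e] mono unfolding atLeast0LessThan by simp
  then have cs: "S^2 \<le> int K * V" unfolding S_def V_def by (simp add: sum_negf power2_eq_square)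
  have amgm: "4 * S * (int K * M - S) \<le> (int K * M)^2"
    using zero_le_power2[of "int K * M - 2 * S"] by (simp add: algebra_simps power2_eq_square)
  define Z where "Z = int K * (int K + 1) * M^2"
  have "4 * D \<le> Z"
  proof (cases "K = 0")
    case True then show ?thesis unfolding D_def Z_def by (simp add: row_form_def)
  next
    case False
    have "int K * (4 * D) = 4 * (2 * (int K * P)) - 4 * (int K * V) - 4 * int K * S^2"
      unfolding D by (simp add: algebra_simps)
    also have "\<dots> \<le> 4 * (int K * (int K + 1) * M * S) - 4 * S^2 - 4 * int K * S^2"
      using lin cs by linarith
    also have "\<dots> = (int K + 1) * (4 * S * (int K * M - S))" by (simp add: algebra_simps power2_eq_square)
    also have "\<dots> \<le> (int K + 1) * (int K * M)^2" using amgm by (rule mult_left_mono) simp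
    also have "\<dots> = int K * (int K * (int K + 1) * M^2)" by (simp add: algebra_simps power2_eq_square)
    finally show ?thesis using False unfolding Z_def by simp
  qed
  moreover have "12 * row_form s K (stair K) + 3 * Z = stair_value s K"
    using row_form_stair[of s K] unfolding Z_def M_def by (simp add: algebra_simps)
  ultimately have "12 * D + 12 * row_form s K (stair K) \<le> stair_value s K" by linarith
  then show ?thesis unfolding D_def by simp
qed

lemma stair_value_below_T:
  assumes A: "A = s div 2" and KA: "K < A"
  shows "stair_value s K < 12 * row_form s A (\<lambda>k. int (s - 1 - 2*k))"
proof -
  define MA where "MA = int s - 2 * int A"
  have MA: "0 \<le> MA" "MA \<le> 1" unfolding MA_def A by linarith+
  have A1: "1 \<le> A" using KA by simp
  have "stair_value s K \<le> stair_value s (A - 1)"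
    using stair_value_mono[of K "A - 1 - K" s] KA A by simp
  moreover have "stair_value s A - stair_value s (A-1) = 6 * int A * ((int s)^2 - 2 * (int s + 1) * (int A - 1))"
    using stair_value_step[of s "A-1"] A1 by (simp add: of_nat_diff)
  moreover have "12 * row_form s A (\<lambda>k. int (s - 1 - 2*k)) = stair_value s A - 3 * int A * (int A + 1) * MA^2"
    using row_form_stair[of s A] row_form_T_rows[OF A] unfolding MA_def by simp
  moreover have "3 * int A * (int A + 1) * MA^2 \<le> 3 * int A * (int A + 1)"
    using MA by (simp add: mult_left_mono power2_eq_square mult_le_one)
  moreover have "6 * int A * (int s + 2) \<le> 6 * int A * ((int s)^2 - 2 * (int s + 1) * (int A - 1))"
  proof -
    have "(int s + 1) * (2 * int A - 2) \<le> (int s + 1) * (int s - 2)"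
      using MA unfolding MA_def by (intro mult_left_mono) simp_all
    then show ?thesis by (intro mult_left_mono) (simp_all add: algebra_simps power2_eq_square)
  qed
  moreover have "3 * int A * (int A + 1) < 6 * int A * (int s + 2)"
  proof -
    have "(3 * int A) * (int A + 1) < (3 * int A) * (2 * (int s + 2))"
      using MA A1 unfolding MA_def by (intro mult_strict_left_mono) simp_all
    then show ?thesis by (simp add: algebra_simps)
  qed
  ultimately show ?thesis by linarith
qed

lemma row_form_full_odd:
  assumes A: "A = s div 2" and od: "odd s"
    and mono: "\<And>i j. i \<le> j \<Longrightarrow> j < A \<Longrightarrow> e j \<le> e i"
    and e01: "\<And>k. k < A \<Longrightarrow> e k = 0 \<or> e k = 1"
  shows "row_form s A (\<lambda>k. stair A k + e k) \<le> row_form s A (\<lambda>k. int (s - 1 - 2*k))"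
    and "row_form s A (\<lambda>k. stair A k + e k) = row_form s A (\<lambda>k. int (s - 1 - 2*k))
          \<Longrightarrow> (\<forall>k<A. e k = 1) \<or> (\<forall>k<A. e k = 0)"
proof -
  have sA: "int s = 2 * int A + 1" using A od by (auto elim!: oddE)
  define J where "J = {k. k < A \<and> e k = 1}"
  have "J = {..<card J}"
  proof (rule down_closed_initial)
    fix m m' assume "m \<in> J" "m' \<le> m"
    then show "m' \<in> J" unfolding J_def using mono[of m' m] e01[of m'] by force
  qed (simp add: J_def)
  then have ek: "\<And>k. k < A \<Longrightarrow> e k = (if k < card J then 1 else 0)"
    using e01 unfolding J_def by (metis (mono_tags, lifting) lessThan_iff mem_Collect_eq)
  define j where "j = card J"
  have jA: "j \<le> A" unfolding j_def J_def by (rule order.trans[OF card_mono[of "{..<A}"]]) auto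
  have P: "(\<Sum>k<A. stair_weight s A k * e k) = (\<Sum>k<j. stair_weight s A k)"
    by (rule sum.mono_neutral_cong_right) (use jA ek j_def in auto)
  have V: "(\<Sum>k<A. (e k)^2) = int j"
    using sum.mono_neutral_cong_right[of "{..<A}" "{..<j}" "\<lambda>k. (e k)^2" "\<lambda>_. 1::int"] jA ek j_def by simp
  have S: "(\<Sum>k<A. e k) = int j"
    using sum.mono_neutral_cong_right[of "{..<A}" "{..<j}" e "\<lambda>_. 1::int"] jA ek j_def by simp
  have D: "row_form s A (\<lambda>k. stair A k + e k) - row_form s A (\<lambda>k. int (s - 1 - 2*k))
      = 2 * int j * (int A + 1) * (int j - int A)"
    using row_form_perturb[of s A e] row_form_T_rows[OF A] stair_weight_sum[of s A j]
    unfolding P V S sA by (simp add: algebra_simps power2_eq_square)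
  have "2 * int j * (int A + 1) * (int j - int A) \<le> 0"
    using jA by (simp add: mult_nonneg_nonpos)
  then show "row_form s A (\<lambda>k. stair A k + e k) \<le> row_form s A (\<lambda>k. int (s - 1 - 2*k))" using D by linarith
  assume "row_form s A (\<lambda>k. stair A k + e k) = row_form s A (\<lambda>k. int (s - 1 - 2*k))"
  then have "j = 0 \<or> j = A" using D by simp
  then show "(\<forall>k<A. e k = 1) \<or> (\<forall>k<A. e k = 0)" using ek j_def by auto
qed

text \<open>Row size profiles of closed subsets of \<open>T s\<close>: rows fit into \<open>T s\<close>, and a nonempty row
  is at least two shorter than the previous one.\<close>
definition admissible_rows :: "nat \<Rightarrow> (nat \<Rightarrow> nat) \<Rightarrow> bool" where
  "admissible_rows s c \<longleftrightarrow> (\<forall>k. c k \<le> s - 1 - 2*k) \<and> (\<forall>k. 0 < c (Suc k) \<longrightarrow> c (Suc k) + 2 \<le> c k)"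

lemma admissible_support:
  assumes adm: "admissible_rows s c"
  obtains K where "K \<le> s div 2" "\<And>k. k < K \<Longrightarrow> 0 < c k" "\<And>k. K \<le> k \<Longrightarrow> c k = 0"
proof
  have H1: "\<And>k. c k \<le> s - 1 - 2*k" and H2: "\<And>k. 0 < c (Suc k) \<Longrightarrow> c (Suc k) + 2 \<le> c k"
    using adm unfolding admissible_rows_def by auto
  have cA: "c (s div 2) = 0" using H1[of "s div 2"] by simp
  define K where "K = (LEAST k. c k = 0)"
  show "K \<le> s div 2" unfolding K_def by (rule Least_le) (rule cA)
  show "\<And>k. k < K \<Longrightarrow> 0 < c k" unfolding K_def using not_less_Least by blast
  have cK: "c K = 0" unfolding K_def by (rule LeastI[of _ "s div 2"]) (rule cA)
  have "c (K + d) = 0" for d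
  proof (induction d)
    case (Suc d)
    then show ?case using H2[of "K + d"] by (cases "c (Suc (K + d)) = 0") auto
  qed (simp add: cK)
  then show "\<And>k. K \<le> k \<Longrightarrow> c k = 0" by (metis le_add_diff_inverse)
qed

lemma admissible_excess:
  assumes adm: "admissible_rows s c"
    and pos: "\<And>k. k < K \<Longrightarrow> 0 < c k"
    and e: "\<And>k. e k = int (c k) - stair K k"
  shows "\<And>i j. i \<le> j \<Longrightarrow> j < K \<Longrightarrow> e j \<le> e i"
    and "\<And>k. k < K \<Longrightarrow> 0 \<le> e k"
    and "\<And>k. k < K \<Longrightarrow> e k \<le> int s - 2 * int K"
proof -
  have H1: "\<And>k. c k \<le> s - 1 - 2*k" and H2: "\<And>k. 0 < c (Suc k) \<Longrightarrow> c (Suc k) + 2 \<le> c k"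
    using adm unfolding admissible_rows_def by auto
  have step: "e (Suc k) \<le> e k" if "Suc k < K" for k
    using H2[of k] pos[OF that] unfolding e stair_def by simp
  show mono: "\<And>i j. i \<le> j \<Longrightarrow> j < K \<Longrightarrow> e j \<le> e i"
  proof -
    fix i j :: nat assume "i \<le> j" "j < K"
    then show "e j \<le> e i"
    proof (induction j)
      case (Suc j)
      then show ?case using step[of j] by (cases "i = Suc j") auto
    qed simp
  qed
  show "\<And>k. k < K \<Longrightarrow> 0 \<le> e k"
  proof -
    fix k assume k: "k < K"
    have "0 \<le> e (K - 1)" using pos[of "K - 1"] k unfolding e stair_def by (simp add: of_nat_diff)
    moreover have "e (K - 1) \<le> e k" using mono[of k "K - 1"] k by simp
    ultimately show "0 \<le> e k" by simp
  qed
  show "\<And>k. k < K \<Longrightarrow> e k \<le> int s - 2 * int K"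
  proof -
    fix k assume k: "k < K"
    then have "c k + 2*k + 1 \<le> s" using H1[of k] pos[OF k] by simp
    then show "e k \<le> int s - 2 * int K" unfolding e stair_def by simp
  qed
qed

lemma T_rows_shift_eq:
  assumes A: "A = s div 2" and zero: "\<And>k. A \<le> k \<Longrightarrow> c k = 0"
    and below: "\<And>k. k < A \<Longrightarrow> int (c k) = int (s - 1 - 2*k) - int d"
  shows "c = (\<lambda>k. s - 1 - 2*k - d)"
proof
  fix k show "c k = s - 1 - 2*k - d"
  proof (cases "k < A")
    case True
    then have "2*k + 1 \<le> s" unfolding A by linarith
    then have "int (c k) = int s - 1 - 2 * int k - int d" using below[OF True] by (simp add: of_nat_diff)
    then show ?thesis by linarith
  next
    case False
    then show ?thesis using zero[of k] unfolding A by simp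
  qed
qed

lemma row_form_max_full:
  assumes adm: "admissible_rows s c" and A: "A = s div 2"
    and pos: "\<And>k. k < A \<Longrightarrow> 0 < c k" and zero: "\<And>k. A \<le> k \<Longrightarrow> c k = 0"
  shows "row_form s A (\<lambda>k. int (c k)) \<le> row_form s A (\<lambda>k. int (s - 1 - 2*k))
    \<and> (row_form s A (\<lambda>k. int (c k)) = row_form s A (\<lambda>k. int (s - 1 - 2*k)) \<longrightarrow>
         (\<forall>k. c k = s - 1 - 2*k) \<or> (odd s \<and> (\<forall>k. c k = s - 1 - 2*k - 1)))"
proof (cases "even s")
  case True
  define e where "e k = int (c k) - stair A k" for k
  note exc = admissible_excess[OF adm pos e_def]
  have "int s - 2 * int A = 0" using True unfolding A by (auto elim!: evenE)
  then have "e k = 0" if "k < A" for k using exc(2,3)[of k] that by simp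
  then have "c = (\<lambda>k. s - 1 - 2*k - 0)"
    using True by (intro T_rows_shift_eq[OF A zero]) (auto simp: e_def stair_def A)
  then show ?thesis by simp
next
  case False
  define e where "e k = int (c k) - stair A k" for k
  note exc = admissible_excess[OF adm pos e_def]
  have e01: "e k = 0 \<or> e k = 1" if "k < A" for k
    using exc(2,3)[of k] that False unfolding A by presburger
  have c_e: "(\<lambda>k. int (c k)) = (\<lambda>k. stair A k + e k)" unfolding e_def by simp
  note odd_case = row_form_full_odd[OF A False exc(1) e01]
  have le: "row_form s A (\<lambda>k. int (c k)) \<le> row_form s A (\<lambda>k. int (s - 1 - 2*k))"
    unfolding c_e by (rule odd_case(1))
  have "(\<forall>k. c k = s - 1 - 2*k) \<or> (\<forall>k. c k = s - 1 - 2*k - 1)"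
    if "row_form s A (\<lambda>k. int (c k)) = row_form s A (\<lambda>k. int (s - 1 - 2*k))"
  proof -
    have "(\<forall>k<A. e k = 1) \<or> (\<forall>k<A. e k = 0)" using odd_case(2) that unfolding c_e by simp
    then show ?thesis
    proof
      assume "\<forall>k<A. e k = 1"
      then have "c = (\<lambda>k. s - 1 - 2*k - 0)"
        using False by (intro T_rows_shift_eq[OF A zero]) (auto simp: e_def stair_def A elim!: oddE)
      then show ?thesis by simp
    next
      assume "\<forall>k<A. e k = 0"
      then have "c = (\<lambda>k. s - 1 - 2*k - 1)"
        using False by (intro T_rows_shift_eq[OF A zero]) (auto simp: e_def stair_def A elim!: oddE)
      then show ?thesis by simp
    qed
  qed
  then show ?thesis using le False by blast
qed

lemma row_form_max:
  assumes adm: "admissible_rows s c"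
  shows "row_form s s (\<lambda>k. int (c k)) \<le> row_form s s (\<lambda>k. int (s - 1 - 2*k))"
    and "row_form s s (\<lambda>k. int (c k)) = row_form s s (\<lambda>k. int (s - 1 - 2*k)) \<Longrightarrow>
         (\<forall>k. c k = s - 1 - 2*k) \<or> (odd s \<and> (\<forall>k. c k = s - 1 - 2*k - 1))"
proof -
  define A where "A = s div 2"
  obtain K where KA: "K \<le> A" and pos: "\<And>k. k < K \<Longrightarrow> 0 < c k" and zero: "\<And>k. K \<le> k \<Longrightarrow> c k = 0"
    using admissible_support[OF adm] unfolding A_def by blast
  have Qc: "row_form s s (\<lambda>k. int (c k)) = row_form s K (\<lambda>k. int (c k))"
    using row_form_truncate[of K s "\<lambda>k. int (c k)"] KA zero unfolding A_def by simp
  have QT: "row_form s s (\<lambda>k. int (s - 1 - 2*k)) = row_form s A (\<lambda>k. int (s - 1 - 2*k))"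
    by (rule row_form_truncate) (auto simp: A_def)
  have "row_form s s (\<lambda>k. int (c k)) \<le> row_form s s (\<lambda>k. int (s - 1 - 2*k))
    \<and> (row_form s s (\<lambda>k. int (c k)) = row_form s s (\<lambda>k. int (s - 1 - 2*k)) \<longrightarrow>
         (\<forall>k. c k = s - 1 - 2*k) \<or> (odd s \<and> (\<forall>k. c k = s - 1 - 2*k - 1)))"
  proof (cases "K < A")
    case True
    define e where "e k = int (c k) - stair K k" for k
    have "(\<lambda>k. int (c k)) = (\<lambda>k. stair K k + e k)" unfolding e_def by simp
    then have "12 * row_form s K (\<lambda>k. int (c k)) \<le> stair_value s K"
      using row_form_stair_bound[OF admissible_excess(1)[OF adm pos e_def]] by simp
    then show ?thesis using stair_value_below_T[OF A_def True] unfolding Qc QT by simp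
  next
    case False
    then have "K = A" using KA by simp
    then show ?thesis using row_form_max_full[OF adm A_def] pos zero unfolding Qc QT by simp
  qed
  then show "row_form s s (\<lambda>k. int (c k)) \<le> row_form s s (\<lambda>k. int (s - 1 - 2*k))"
    and "row_form s s (\<lambda>k. int (c k)) = row_form s s (\<lambda>k. int (s - 1 - 2*k)) \<Longrightarrow>
         (\<forall>k. c k = s - 1 - 2*k) \<or> (odd s \<and> (\<forall>k. c k = s - 1 - 2*k - 1))"
    by blast+
qed

lemma twice_size_T: "0 < s \<Longrightarrow> twice_size (T s) = row_form s s (\<lambda>k. int (s - 1 - 2*k))"
proof -
  assume s: "0 < s"
  have "\<forall>k<s. row s (T s) k = {s - k - card (row s (T s) k)..<s-k}"
    using row_T[OF s] by auto
  then have "twice_size (T s) = row_form s s (\<lambda>k. int (card (row s (T s) k)))"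
    using twice_size_bound(2)[OF s order.refl] by blast
  also have "(\<lambda>k. int (card (row s (T s) k))) = (\<lambda>k. int (s - 1 - 2*k))" using card_row_T[OF s] by auto
  finally show ?thesis .
qed

text \<open>The key estimate: the beta set of an \<open>(s, s+1, s+2)\<close>-core is a closed subset of \<open>T s\<close>,
  so its rows form an admissible profile and the row form bounds its size by that of \<open>T s\<close>.\<close>
lemma sss_core_twice_size:
  assumes s: "0 < s" and mu: "is_sss_core s mu"
  shows "twice_size (beta mu) \<le> twice_size (T s)"
    and "twice_size (beta mu) = twice_size (T s) \<Longrightarrow>
           beta mu = T s \<or> (odd s \<and> (\<forall>k<s. row s (beta mu) k = {k+2..<s-k}))"
proof -
  have P: "is_partition mu" and cl: "sss_closed s (beta mu)" using sss_core_iff_closed[OF s] mu by auto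
  have XT: "beta mu \<subseteq> T s" by (rule closed_subset_T[OF s cl]) (rule beta_pos[OF P])
  define c where "c k = card (row s (beta mu) k)" for k
  have adm: "admissible_rows s c"
    unfolding admissible_rows_def c_def using row_card_le row_card_step[OF cl] by simp
  note size = twice_size_bound[OF s XT, folded c_def]
  show "twice_size (beta mu) \<le> twice_size (T s)"
    using size(1) row_form_max(1)[OF adm] twice_size_T[OF s] by simp
  assume eq: "twice_size (beta mu) = twice_size (T s)"
  then have e1: "twice_size (beta mu) = row_form s s (\<lambda>k. int (c k))"
    using size(1) row_form_max(1)[OF adm] twice_size_T[OF s] by simp
  then have top: "\<forall>k<s. row s (beta mu) k = {s - k - c k..<s-k}" using size(2) by simp
  have "(\<forall>k. c k = s - 1 - 2*k) \<or> (odd s \<and> (\<forall>k. c k = s - 1 - 2*k - 1))"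
    using row_form_max(2)[OF adm] e1 eq twice_size_T[OF s] by simp
  then show "beta mu = T s \<or> (odd s \<and> (\<forall>k<s. row s (beta mu) k = {k+2..<s-k}))"
  proof
    assume "\<forall>k. c k = s - 1 - 2*k"
    then have "\<And>k. k < s \<Longrightarrow> row s (beta mu) k = row s (T s) k"
      using top row_T[OF s] by auto
    then show ?thesis using rows_eq[OF s XT order.refl] by blast
  next
    assume "odd s \<and> (\<forall>k. c k = s - 1 - 2*k - 1)"
    then show ?thesis using top by auto
  qed
qed

lemma card_T:
  assumes s: "0 < s"
  shows "int (card (T s)) = int (s div 2) * (int s - int (s div 2))"
proof -
  define A where "A = s div 2"
  have sA: "s \<le> 2 * A + 1" "2 * A \<le> s" unfolding A_def by presburger+
  have "card (T s) = (\<Sum>k<s. card (row s (T s) k))" using sum_rows(2)[OF s order.refl] .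
  also have "\<dots> = (\<Sum>k<s. s - 1 - 2*k)" using card_row_T[OF s] by simp
  also have "\<dots> = (\<Sum>k<A. s - 1 - 2*k)"
    by (rule sum.mono_neutral_right) (use sA in auto)
  finally have "int (card (T s)) = (\<Sum>k<A. int (s - 1 - 2*k))" by simp
  also have "\<dots> = (\<Sum>k<A. int s - 1 - 2 * int k)"
    by (rule sum.cong) (use sA in auto)
  also have "\<dots> = int A * (int s - 1) - 2 * (\<Sum>k<A. int k)"
    by (simp add: sum_subtractf sum_distrib_left)
  also have "\<dots> = int A * (int s - int A)" using sum_int_id[of A] by (simp add: algebra_simps)
  finally show ?thesis unfolding A_def .
qed

lemma max_T:
  assumes s3: "3 \<le> s"
  shows "(s div 2) * s - 1 \<in> T s" and "\<And>x. x \<in> T s \<Longrightarrow> x \<le> (s div 2) * s - 1"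
proof -
  define A where "A = s div 2"
  have s: "0 < s" using s3 by simp
  have sA: "s \<le> 2 * A + 1" "2 * A \<le> s" unfolding A_def by presburger+
  have A1: "1 \<le> A" using s3 unfolding A_def by simp
  have "cell s (A - 1, s - A) \<in> T s" using T_cell_iff[OF s] sA A1 by simp
  moreover have "cell s (A - 1, s - A) = A * s - 1"
  proof -
    obtain B where B: "A = Suc B" using A1 by (cases A) auto
    show ?thesis unfolding cell_def B using sA B by (simp add: algebra_simps)
  qed
  ultimately show "(s div 2) * s - 1 \<in> T s" unfolding A_def by simp
  fix x assume x: "x \<in> T s"
  define k p where "k = x div (s+1)" and "p = x mod (s+1)"
  have xe: "x = k*(s+1) + p" unfolding k_def p_def by (rule div_mult_mod_eq[symmetric])
  have kp: "k < p" "p + k < s" using T_char[OF s, of x] x unfolding k_def p_def by auto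
  have kA: "k + 1 \<le> A" using kp sA by linarith
  have "x \<le> k * (s+1) + (s - 1 - k)" using xe kp by simp
  also have "\<dots> = (k+1) * s - 1" using kp by (simp add: algebra_simps)
  also have "(k+1) * s \<le> A * s" using kA by (rule mult_le_mono1)
  then have "(k+1) * s - 1 \<le> A * s - 1" by simp
  finally show "x \<le> (s div 2) * s - 1" unfolding A_def .
qed

text \<open>For odd \<open>s = 2A+1\<close>, \<open>kappa s\<close> has \<open>A(A+1)\<close> parts but largest part \<open>As - A(A+1) = A^2\<close>,
  so it differs from its conjugate.\<close>
lemma kappa_not_selfconj:
  assumes s3: "3 \<le> s" and od: "odd s"
  shows "kappa s \<noteq> conjugate (kappa s)"
proof
  assume eq: "kappa s = conjugate (kappa s)"
  have s: "0 < s" using s3 by simp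
  define A where "A = s div 2"
  have s2: "s = 2 * A + 1" unfolding A_def using od by simp
  have A1: "1 \<le> A" using s3 unfolding A_def by simp
  have P: "is_partition (kappa s)" and B: "beta (kappa s) = T s" using kappa_spec[OF s] by auto
  define n where "n = length (kappa s)"
  have nA: "int n = int A * (int A + 1)"
    using card_T[OF s] card_beta[OF P] B s2 unfolding A_def n_def by simp
  have "0 < int A * (int A + 1)" using A1 by simp
  then have n0: "0 < n" using nA by linarith
  text \<open>The largest beta number, that of the first row, is the largest element of \<open>T s\<close>.\<close>
  have bnum0: "bnum (kappa s) 0 = A * s - 1"
  proof (rule antisym)
    have "bnum (kappa s) 0 \<in> beta (kappa s)" unfolding beta_bnum[OF P] using n0 n_def by auto
    then show "bnum (kappa s) 0 \<le> A * s - 1" using max_T(2)[OF s3] B unfolding A_def by simp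
    have "A * s - 1 \<in> beta (kappa s)" using max_T(1)[OF s3] B unfolding A_def by simp
    then obtain i where i: "i < n" "A * s - 1 = bnum (kappa s) i" unfolding beta_bnum[OF P] n_def by auto
    then show "A * s - 1 \<le> bnum (kappa s) 0"
      using bnum_strict[OF P, of 0 i] n_def by (cases "i = 0") auto
  qed
  have "kappa s \<noteq> []" using n0 n_def by auto
  then have "kappa s ! 0 = n" using conj_len[of "kappa s"] eq n_def by simp
  then have "A * s - 1 = n + (n - 1)" using bnum0 unfolding bnum_def n_def by simp
  moreover have "0 < A * s" using A1 s by simp
  ultimately have "A * s = n + n" using n0 by linarith
  then have "int (A * s) = int (n + n)" by simp
  then have "int A * int s = 2 * int n" by simp
  then have "int A * (2 * int A + 1) = 2 * (int A * (int A + 1))" using nA s2 by simp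
  then show False using A1 by (simp add: algebra_simps)
qed

lemma sss_core_psize_le:
  assumes s: "0 < s" and mu: "is_sss_core s mu"
  shows "psize mu \<le> psize (kappa s)"
proof -
  have P: "is_partition mu" using mu unfolding is_sss_core_def by simp
  have K: "is_partition (kappa s)" "beta (kappa s) = T s" using kappa_spec[OF s] by auto
  have "int (2 * psize mu) \<le> int (2 * psize (kappa s))"
    using psize_twice_size[OF P] psize_twice_size[OF K(1)] sss_core_twice_size(1)[OF s mu] K(2) by simp
  then show ?thesis by simp
qed

lemma max_sss_core_cases:
  assumes s: "0 < s" and mu: "is_sss_core s mu" and eq: "psize mu = psize (kappa s)"
  shows "mu = kappa s \<or> (odd s \<and> (\<forall>k<s. row s (beta mu) k = {k+2..<s-k}))"
proof -
  have P: "is_partition mu" using mu unfolding is_sss_core_def by simp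
  have K: "is_partition (kappa s)" "beta (kappa s) = T s" using kappa_spec[OF s] by auto
  have "twice_size (beta mu) = twice_size (T s)"
    using psize_twice_size[OF P] psize_twice_size[OF K(1)] K(2) eq by simp
  then have "beta mu = beta (kappa s) \<or> (odd s \<and> (\<forall>k<s. row s (beta mu) k = {k+2..<s-k}))"
    using sss_core_twice_size(2)[OF s mu] K(2) by simp
  then show ?thesis using beta_inj[OF P K(1)] by blast
qed

lemma short_rows_core_unique:
  assumes s: "0 < s" and "is_sss_core s mu" "is_sss_core s nu"
    and "\<forall>k<s. row s (beta mu) k = {k+2..<s-k}" "\<forall>k<s. row s (beta nu) k = {k+2..<s-k}"
  shows "mu = nu"
proof -
  have "beta mu = beta nu"
    using rows_eq[OF s sss_beta_subset_T[OF s assms(2)] sss_beta_subset_T[OF s assms(3)]] assms(4,5) by simp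
  then show ?thesis using beta_inj assms(2,3) unfolding is_sss_core_def by blast
qed

theorem theorem3p4:
  fixes s :: nat
  assumes "s \<ge> 3"
  shows "is_partition (kappa s) \<and> beta (kappa s) = T s
     \<and> is_sss_core s (kappa s)
     \<and> (\<forall>mu. is_sss_core s mu \<longrightarrow> psize mu \<le> psize (kappa s))
     \<and> (even s \<longrightarrow> (\<forall>mu. is_sss_core s mu \<and> psize mu = psize (kappa s) \<longrightarrow> mu = kappa s)
                     \<and> conjugate (kappa s) = kappa s)
     \<and> (odd s \<longrightarrow> kappa s \<noteq> conjugate (kappa s)
                     \<and> {mu. is_sss_core s mu \<and> psize mu = psize (kappa s)} = {kappa s, conjugate (kappa s)})"
proof -
  have s: "0 < s" using assms by simp
  have K: "is_partition (kappa s) \<and> beta (kappa s) = T s" and Ksss: "is_sss_core s (kappa s)"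
    using kappa_spec[OF s] kappa_sss[OF s] by auto
  have Csss: "is_sss_core s (conjugate (kappa s))" and Cps: "psize (conjugate (kappa s)) = psize (kappa s)"
    using conj_sss[OF Ksss] conj_psize K by auto
  note maxc = max_sss_core_cases[OF s]
  have "even s \<Longrightarrow> is_sss_core s mu \<Longrightarrow> psize mu = psize (kappa s) \<Longrightarrow> mu = kappa s" for mu
    using maxc by blast
  then have even_case: "even s \<longrightarrow> (\<forall>mu. is_sss_core s mu \<and> psize mu = psize (kappa s) \<longrightarrow> mu = kappa s)
                     \<and> conjugate (kappa s) = kappa s"
    using Csss Cps by blast
  have odd_case: "{mu. is_sss_core s mu \<and> psize mu = psize (kappa s)} = {kappa s, conjugate (kappa s)}"
    if ne: "kappa s \<noteq> conjugate (kappa s)"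
  proof -
    have C_rows: "\<forall>k<s. row s (beta (conjugate (kappa s))) k = {k+2..<s-k}"
      using maxc[OF Csss Cps] ne by auto
    have "mu = conjugate (kappa s)" if "is_sss_core s mu" "psize mu = psize (kappa s)" "mu \<noteq> kappa s" for mu
      using short_rows_core_unique[OF s that(1) Csss _ C_rows] maxc[OF that(1,2)] that(3) by blast
    then show ?thesis using Ksss Csss Cps by blast
  qed
  have bound: "\<forall>mu. is_sss_core s mu \<longrightarrow> psize mu \<le> psize (kappa s)"
    using sss_core_psize_le[OF s] by blast
  have "odd s \<longrightarrow> kappa s \<noteq> conjugate (kappa s)
                     \<and> {mu. is_sss_core s mu \<and> psize mu = psize (kappa s)} = {kappa s, conjugate (kappa s)}"
    using odd_case kappa_not_selfconj[OF assms] by simp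
  then show ?thesis using K Ksss bound even_case by (intro conjI) simp_all
qed

end
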